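(* Let $R,L,C,V_{dc},T>0$, and let $A_1,A_2,\boldsymbol{b}_1$ and the switched system be as in the context. Then the matrix $I-\mathrm{e}^{\frac{T}{2}A_2}\mathrm{e}^{\frac{T}{2}A_1}$ is invertible, and the system has a unique $T$-periodic continuous solution $\boldsymbol{x}_p$. This solution is given on one period by $$\boldsymbol{x}_p(t)=\begin{cases}\mathrm{e}^{tA_1}\boldsymbol{x}_p(0)+A_1^{-1}(\mathrm{e}^{tA_1}-I)\boldsymbol{b}_1, & t\in[0,\tfrac T2],\\[1mm] \mathrm{e}^{(t-\frac T2)A_2}\boldsymbol{x}_p(\tfrac T2), & t\in(\tfrac T2,T],\end{cases}$$ where $$\boldsymbol{x}_p(0)=\left(I-\mathrm{e}^{\frac{T}{2}A_2}\mathrm{e}^{\frac{T}{2}A_1}\right)^{-1}\mathrm{e}^{\frac{T}{2}A_2}A_1^{-1}\left(\mathrm{e}^{\frac{T}{2}A_1}-I\right)\boldsymbol{b}_1 .$$ The periodic solution is globally asymptotically stable: for every initial value $\boldsymbol{x}(0)=\boldsymbol{x}_0\in\mathbb{R}^2$, the continuous solution $\boldsymbol{x}$ satisfies $\boldsymbol{x}(t)-\boldsymbol{x}_p(t)\to 0$ as $t\to\infty$.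
   Context: Let $R,L,C,V_{dc},T>0$ be parameters. Let $\boldsymbol{x}(t)=[i(t),v(t)]^{\intercal}$ (inductor current $i$, capacitor voltage $v$). Define $$A_1=\begin{bmatrix}-\frac RL & -\frac1L\\ \frac1C & 0\end{bmatrix},\quad A_2=\begin{bmatrix}-\frac RL & \frac1L\\ -\frac1C & 0\end{bmatrix},\quad \boldsymbol{b}_1=\begin{bmatrix}\frac{V_{dc}}L\\ 0\end{bmatrix}.$$ The switched system on $t\ge 0$ is: $\boldsymbol{x}'=A_1\boldsymbol{x}+\boldsymbol{b}_1$ on each interval $[(k-1)T,(k-1)T+\frac T2]$ and $\boldsymbol{x}'=A_2\boldsymbol{x}$ on each interval $[(k-1)T+\frac T2,kT]$, $k=1,2,3,\dots$; i.e. the first system is used when $t \bmod T<T/2$ and the second otherwise. A solution is a continuous function $\boldsymbol{x}:[0,\infty)\to\mathbb{R}^2$ satisfying these equations on each interval. $\mathrm{e}^{tA}$ denotes the matrix exponential. *)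

theory Defs
  imports "HOL-Analysis.Analysis"
begin

definition mpow :: "real^'n^'n \<Rightarrow> nat \<Rightarrow> real^'n^'n" where
  "mpow A n = (((**) A) ^^ n) (mat 1)"

definition mexp :: "real^'n^'n \<Rightarrow> real^'n^'n" where
  "mexp A = (\<Sum>n. (1 / fact n) *\<^sub>R mpow A n)"

definition A1 :: "real \<Rightarrow> real \<Rightarrow> real \<Rightarrow> real^2^2" where
  "A1 R L C = vector [vector [- R / L, - 1 / L], vector [1 / C, 0]]"

definition A2 :: "real \<Rightarrow> real \<Rightarrow> real \<Rightarrow> real^2^2" where
  "A2 R L C = vector [vector [- R / L, 1 / L], vector [- 1 / C, 0]]"

definition b1 :: "real \<Rightarrow> real \<Rightarrow> real^2" where
  "b1 L Vdc = vector [Vdc / L, 0]"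

definition is_solution ::
  "real \<Rightarrow> real \<Rightarrow> real \<Rightarrow> real \<Rightarrow> real \<Rightarrow> (real \<Rightarrow> real^2) \<Rightarrow> bool" where
  "is_solution R L C Vdc T x \<longleftrightarrow>
     continuous_on {0..} x \<and>
     (\<forall>k::nat. \<forall>t \<in> {real k * T .. real k * T + T / 2}.
        (x has_vector_derivative (A1 R L C *v x t + b1 L Vdc))
          (at t within {real k * T .. real k * T + T / 2})) \<and>
     (\<forall>k::nat. \<forall>t \<in> {real k * T + T / 2 .. real (Suc k) * T}.
        (x has_vector_derivative (A2 R L C *v x t))
          (at t within {real k * T + T / 2 .. real (Suc k) * T}))"

end

theory Submission imports Defs begin

text \<open>On each half period the system is linear up to a translation, so a solution is determined
  by its initial value, and its values at the times \<open>kT\<close> are the iterates of an affine period map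
  \<open>a \<mapsto> P a + c\<close> with \<open>P = e\<^bsup>(T/2)A\<^sub>2\<^esup> e\<^bsup>(T/2)A\<^sub>1\<^esup>\<close>. Periodic solutions are the fixed points of this map.
  The energy \<open>L i\<^sup>2 + C v\<^sup>2\<close> of the homogeneous systems has derivative \<open>-2R i\<^sup>2\<close>, and it cannot stay
  constant on an interval unless the state is zero, because \<open>i \<equiv> 0\<close> forces \<open>v = \<plusminus>L i' = 0\<close>.
  Hence \<open>P\<close> strictly decreases the energy of every nonzero vector: \<open>1\<close> is not an eigenvalue,
  so \<open>I - P\<close> is invertible and the periodic solution is unique; and by compactness of the unit
  sphere \<open>P\<close> contracts the energy by a factor \<open>q < 1\<close>, so the difference of two solutions
  decays like \<open>q\<^bsup>t/T\<^esup>\<close>.\<close>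

section \<open>Matrices\<close>

lemma abs_matrix_entry_le_norm: "\<bar>(M::real^'n^'m) $ i $ j\<bar> \<le> norm M"
  by (rule order_trans[OF component_le_norm_cart Finite_Cartesian_Product.norm_nth_le])

lemma norm_le_sum_abs_matrix_entries: "norm (M::real^'n^'m) \<le> (\<Sum>i\<in>UNIV. \<Sum>j\<in>UNIV. \<bar>M $ i $ j\<bar>)"
proof -
  have "norm M \<le> (\<Sum>i\<in>UNIV. norm (M $ i))" by (simp add: norm_vec_def L2_set_le_sum)
  also have "\<dots> \<le> (\<Sum>i\<in>UNIV. \<Sum>j\<in>UNIV. \<bar>M $ i $ j\<bar>)"
    by (rule sum_mono) (rule norm_le_l1_cart)
  finally show ?thesis .
qed

lemma bounded_bilinear_matrix_vector_mult:
  "bounded_bilinear (\<lambda>(M::real^'n^'m) (v::real^'n). M *v v)"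
proof
  fix M M' :: "real^'n^'m" and v v' :: "real^'n" and r :: real
  show "(M + M') *v v = M *v v + M' *v v" by (rule matrix_vector_mult_add_rdistrib)
  show "M *v (v + v') = M *v v + M *v v'" by (rule matrix_vector_right_distrib)
  show "(r *\<^sub>R M) *v v = r *\<^sub>R (M *v v)" by (rule scaleR_matrix_vector_assoc[symmetric])
  show "M *v (r *\<^sub>R v) = r *\<^sub>R (M *v v)" by (rule matrix_vector_mult_scaleR)
  show "\<exists>K. \<forall>M v. norm ((M::real^'n^'m) *v (v::real^'n)) \<le> norm M * norm v * K"
  proof (intro exI allI)
    fix M :: "real^'n^'m" and v :: "real^'n"
    have "norm (M *v v) \<le> onorm ((*v) M) * norm v"
      by (rule onorm[OF matrix_vector_mul_bounded_linear])
    also have "onorm ((*v) M) \<le> (\<Sum>i\<in>UNIV. \<Sum>j\<in>UNIV. \<bar>M $ i $ j\<bar>)"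
      by (rule onorm_le_matrix_component_sum)
    also have "\<dots> \<le> (\<Sum>i\<in>(UNIV::'m set). \<Sum>j\<in>(UNIV::'n set). norm M)"
      by (intro sum_mono abs_matrix_entry_le_norm)
    finally show "norm (M *v v) \<le> norm M * norm v * (real CARD('m) * real CARD('n))"
      by (simp add: mult_right_mono algebra_simps)
  qed
qed

lemma has_vector_derivative_matrix_vector_mult:
  fixes M :: "real \<Rightarrow> real^'n^'m" and u :: "real \<Rightarrow> real^'n"
  assumes "(M has_vector_derivative M') (at t within S)" and "(u has_vector_derivative u') (at t within S)"
  shows "((\<lambda>t. M t *v u t) has_vector_derivative (M t *v u' + M' *v u t)) (at t within S)"
  using bounded_bilinear.has_vector_derivative[OF bounded_bilinear_matrix_vector_mult assms] by simp

lemma matrix_vector_mult_uminus_right: "(M::real^'n^'m) *v (- v) = - (M *v v)"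
  by (rule bounded_bilinear.minus_right[OF bounded_bilinear_matrix_vector_mult])

lemma matrix_vector_mult_uminus_left: "(- M::real^'n^'m) *v v = - (M *v v)"
  by (rule bounded_bilinear.minus_left[OF bounded_bilinear_matrix_vector_mult])

lemma matrix_inv_mult_right: "invertible (A::real^'n^'n) \<Longrightarrow> A ** matrix_inv A = mat 1"
  and matrix_inv_mult_left: "invertible (A::real^'n^'n) \<Longrightarrow> matrix_inv A ** A = mat 1"
  using someI_ex[of "\<lambda>A'. A ** A' = mat 1 \<and> A' ** A = mat 1"]
  by (auto simp: invertible_def matrix_inv_def)

lemma invertible_mat_1_minus:
  fixes P :: "real^'n^'n"
  assumes "\<And>z. P *v z = z \<Longrightarrow> z = 0"
  shows "invertible (mat 1 - P)"
proof -
  have "\<forall>z. (mat 1 - P) *v z = 0 \<longrightarrow> z = 0"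
    using assms by (simp add: matrix_vector_mult_diff_rdistrib)
  then show ?thesis
    by (simp add: invertible_left_inverse matrix_left_invertible_ker)
qed

lemma homogeneous_contraction_uniform:
  fixes P :: "real^'n^'n" and V :: "real^'n \<Rightarrow> real"
  assumes V_cont: "continuous_on UNIV V"
    and V_scale: "\<And>c z. V (c *\<^sub>R z) = c\<^sup>2 * V z"
    and V_pos: "\<And>z. z \<noteq> 0 \<Longrightarrow> 0 < V z"
    and V_less: "\<And>z. z \<noteq> 0 \<Longrightarrow> V (P *v z) < V z"
  obtains q where "0 \<le> q" "q < 1" "\<And>z. V (P *v z) \<le> q * V z"
proof -
  let ?S = "sphere (0::real^'n) 1" and ?ratio = "\<lambda>z. V (P *v z) / V z"
  have V_nonneg: "0 \<le> V z" for z
    using V_pos V_scale[of 0 z] by (cases "z = 0") (auto intro: less_imp_le)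
  have "axis undefined 1 \<in> ?S"
    by simp
  moreover have "continuous_on ?S ?ratio"
    using V_pos by (intro continuous_on_divide continuous_on_compose2[OF V_cont]
        matrix_vector_mult_linear_continuous_on continuous_on_id)
      (auto, metis less_irrefl norm_zero zero_neq_one)
  ultimately obtain w where w: "w \<in> ?S" and w_max: "\<And>z. z \<in> ?S \<Longrightarrow> ?ratio z \<le> ?ratio w"
    using continuous_attains_sup[OF compact_sphere] by blast
  have "w \<noteq> 0"
    using w by auto
  show ?thesis
  proof
    show "0 \<le> ?ratio w" and "?ratio w < 1"
      using V_less[OF \<open>w \<noteq> 0\<close>] V_pos[OF \<open>w \<noteq> 0\<close>] V_nonneg by simp_all
    show "V (P *v z) \<le> ?ratio w * V z" for z
    proof (cases "z = 0")
      case True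
      then show ?thesis
        using V_scale[of 0 0] by simp
    next
      case False
      define u where "u = z /\<^sub>R norm z"
      have "u \<in> ?S" "u \<noteq> 0" and z: "z = norm z *\<^sub>R u"
        using False by (simp_all add: u_def)
      then have "V (P *v u) \<le> ?ratio w * V u"
        using w_max[of u] V_pos[of u] by (simp add: divide_le_eq)
      then have "(norm z)\<^sup>2 * V (P *v u) \<le> (norm z)\<^sup>2 * (?ratio w * V u)"
        by (rule mult_left_mono) simp
      then show ?thesis
        by (subst (1 2) z) (simp add: matrix_vector_mult_scaleR V_scale algebra_simps)
    qed
  qed
qed

section \<open>The matrix exponential\<close>

text \<open>Bounded linear maps carry no algebra structure in the library; wrapping the endomorphisms
  of \<open>\<real>\<^sup>n\<close> in a type with composition as multiplication makes the generic \<open>exp\<close> of a Banach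
  algebra available for matrices (see \<open>mexp_eq_exp\<close>).\<close>

typedef (overloaded) ('n::finite) endo = "UNIV :: ((real^'n) \<Rightarrow>\<^sub>L (real^'n)) set" by auto
setup_lifting type_definition_endo

instantiation endo :: (finite) real_normed_vector
begin
lift_definition norm_endo :: "'a endo \<Rightarrow> real" is norm .
lift_definition minus_endo :: "'a endo \<Rightarrow> 'a endo \<Rightarrow> 'a endo" is "(-)" .
lift_definition plus_endo :: "'a endo \<Rightarrow> 'a endo \<Rightarrow> 'a endo" is "(+)" .
lift_definition uminus_endo :: "'a endo \<Rightarrow> 'a endo" is uminus .
lift_definition zero_endo :: "'a endo" is 0 .
lift_definition scaleR_endo :: "real \<Rightarrow> 'a endo \<Rightarrow> 'a endo" is scaleR .
definition dist_endo :: "'a endo \<Rightarrow> 'a endo \<Rightarrow> real" where "dist_endo a b = norm (a - b)"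
definition uniformity_endo :: "('a endo \<times> 'a endo) filter" where
  "uniformity_endo = (INF e\<in>{0 <..}. principal {(x, y). dist x y < e})"
definition open_endo :: "'a endo set \<Rightarrow> bool" where
  "open_endo S = (\<forall>x\<in>S. \<forall>\<^sub>F (x', y) in uniformity. x' = x \<longrightarrow> y \<in> S)"
definition sgn_endo :: "'a endo \<Rightarrow> 'a endo" where "sgn_endo x = scaleR (inverse (norm x)) x"
instance
  by standard
    (unfold dist_endo_def open_endo_def sgn_endo_def uniformity_endo_def,
     (rule refl | (transfer, force simp: algebra_simps norm_triangle_ineq))+)
end

instantiation endo :: (finite) real_normed_algebra_1
begin
lift_definition times_endo :: "'a endo \<Rightarrow> 'a endo \<Rightarrow> 'a endo" is "(o\<^sub>L)" .
lift_definition one_endo :: "'a endo" is id_blinfun .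
instance
proof
  fix a b c :: "'a endo" and r :: real
  show "a * b * c = a * (b * c)" by transfer (rule blinfun_eqI, simp)
  show "(a + b) * c = a * c + b * c" by transfer (rule blinfun_eqI, simp add: blinfun.bilinear_simps)
  show "a * (b + c) = a * b + a * c" by transfer (rule blinfun_eqI, simp add: blinfun.bilinear_simps)
  show "r *\<^sub>R a * b = r *\<^sub>R (a * b)" by transfer (rule blinfun_eqI, simp add: blinfun.bilinear_simps)
  show "a * r *\<^sub>R b = r *\<^sub>R (a * b)" by transfer (rule blinfun_eqI, simp add: blinfun.bilinear_simps)
  show "1 * a = a" by transfer (rule blinfun_eqI, simp)
  show "a * 1 = a" by transfer (rule blinfun_eqI, simp)
  show "norm (a * b) \<le> norm a * norm b" by transfer (rule norm_blinfun_compose)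
  show "norm (1::'a endo) = 1" by transfer simp
  have "(0 :: (real^'a) \<Rightarrow>\<^sub>L (real^'a)) \<noteq> id_blinfun"
    by (metis axis_eq_0_iff blinfun_apply_id_blinfun zero_blinfun.rep_eq one_neq_zero)
  then show "(0::'a endo) \<noteq> 1" by transfer
qed
end


instance endo :: (finite) banach
proof
  fix X :: "nat \<Rightarrow> 'n::finite endo"
  assume "Cauchy X"
  then have "Cauchy (\<lambda>n. Rep_endo (X n))"
    unfolding Cauchy_def dist_norm by transfer simp
  then obtain l where "(\<lambda>n. Rep_endo (X n)) \<longlonglongrightarrow> l"
    using convergent_eq_Cauchy by (auto simp: convergent_def)
  then have "X \<longlonglongrightarrow> Abs_endo l"
    unfolding tendsto_iff dist_norm by transfer (simp add: Abs_endo_inverse)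
  then show "convergent X" by (auto simp: convergent_def)
qed

definition endo_of_matrix :: "real^'n^'n \<Rightarrow> 'n::finite endo" where
  "endo_of_matrix A = Abs_endo (Blinfun (\<lambda>x. A *v x))"

definition matrix_of_endo :: "'n::finite endo \<Rightarrow> real^'n^'n" where
  "matrix_of_endo B = matrix (blinfun_apply (Rep_endo B))"

lemma blinfun_apply_endo_of_matrix: "blinfun_apply (Rep_endo (endo_of_matrix A)) = (\<lambda>x. A *v x)"
  by (simp add: endo_of_matrix_def Abs_endo_inverse bounded_linear_Blinfun_apply)

lemma matrix_of_endo_of_matrix [simp]: "matrix_of_endo (endo_of_matrix A) = A"
  by (simp add: matrix_of_endo_def blinfun_apply_endo_of_matrix)

lemma endo_of_matrix_of_endo [simp]: "endo_of_matrix (matrix_of_endo B) = B"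
proof -
  have "(\<lambda>x. matrix_of_endo B *v x) = blinfun_apply (Rep_endo B)"
    unfolding matrix_of_endo_def by (rule matrix_vector_mul(3)) (rule blinfun.bounded_linear_right)
  then show ?thesis
    by (simp add: endo_of_matrix_def blinfun_apply_inverse Rep_endo_inverse)
qed

lemma endo_of_matrix_eqI:
  assumes "\<And>x. blinfun_apply (Rep_endo B) x = A *v x"
  shows "endo_of_matrix A = B"
  using assms by (metis Rep_endo_inject blinfun_apply_endo_of_matrix blinfun_eqI)

lemma endo_of_matrix_mult: "endo_of_matrix (A ** B) = endo_of_matrix A * endo_of_matrix B"
  by (rule endo_of_matrix_eqI)
    (simp add: times_endo.rep_eq blinfun_apply_endo_of_matrix matrix_vector_mul_assoc)

lemma endo_of_matrix_one: "endo_of_matrix (mat 1) = 1"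
  by (rule endo_of_matrix_eqI) (simp add: one_endo.rep_eq)

lemma endo_of_matrix_add: "endo_of_matrix (A + B) = endo_of_matrix A + endo_of_matrix B"
  by (rule endo_of_matrix_eqI)
    (simp add: plus_endo.rep_eq blinfun.bilinear_simps blinfun_apply_endo_of_matrix
      matrix_vector_mult_add_rdistrib)

lemma endo_of_matrix_scaleR: "endo_of_matrix (r *\<^sub>R A) = r *\<^sub>R endo_of_matrix A"
  by (rule endo_of_matrix_eqI)
    (simp add: scaleR_endo.rep_eq blinfun.bilinear_simps blinfun_apply_endo_of_matrix
      scaleR_matrix_vector_assoc)

lemma matrix_of_endo_mult: "matrix_of_endo (X * Y) = matrix_of_endo X ** matrix_of_endo Y"
  by (metis endo_of_matrix_mult endo_of_matrix_of_endo matrix_of_endo_of_matrix)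

lemma matrix_of_endo_add: "matrix_of_endo (X + Y) = matrix_of_endo X + matrix_of_endo Y"
  by (metis endo_of_matrix_add endo_of_matrix_of_endo matrix_of_endo_of_matrix)

lemma matrix_of_endo_scaleR: "matrix_of_endo (r *\<^sub>R X) = r *\<^sub>R matrix_of_endo X"
  by (metis endo_of_matrix_scaleR endo_of_matrix_of_endo matrix_of_endo_of_matrix)

lemma matrix_of_endo_one: "matrix_of_endo 1 = mat 1"
  by (metis endo_of_matrix_one matrix_of_endo_of_matrix)

lemma abs_matrix_of_endo_entry_le: "\<bar>matrix_of_endo (B::'n::finite endo) $ i $ j\<bar> \<le> norm B"
proof -
  have "\<bar>matrix_of_endo B $ i $ j\<bar> = \<bar>blinfun_apply (Rep_endo B) (axis j 1) $ i\<bar>"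
    by (simp add: matrix_of_endo_def matrix_def)
  also have "\<dots> \<le> norm (blinfun_apply (Rep_endo B) (axis j 1))" by (rule component_le_norm_cart)
  also have "\<dots> \<le> norm (Rep_endo B) * norm (axis j 1 :: real^'n)" by (rule norm_blinfun)
  also have "\<dots> = norm B" by (simp add: norm_endo.rep_eq)
  finally show ?thesis .
qed

lemma bounded_linear_matrix_of_endo: "bounded_linear (matrix_of_endo :: 'n::finite endo \<Rightarrow> _)"
proof (rule bounded_linear_intro[where K = "real (CARD('n))^2"])
  fix X Y :: "'n endo" and r :: real
  show "matrix_of_endo (X + Y) = matrix_of_endo X + matrix_of_endo Y" by (rule matrix_of_endo_add)
  show "matrix_of_endo (r *\<^sub>R X) = r *\<^sub>R matrix_of_endo X" by (rule matrix_of_endo_scaleR)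
  have "norm (matrix_of_endo X) \<le> (\<Sum>i\<in>UNIV. \<Sum>j\<in>UNIV. \<bar>matrix_of_endo X $ i $ j\<bar>)"
    by (rule norm_le_sum_abs_matrix_entries)
  also have "\<dots> \<le> (\<Sum>i\<in>(UNIV::'n set). \<Sum>j\<in>(UNIV::'n set). norm X)"
    by (intro sum_mono abs_matrix_of_endo_entry_le)
  finally show "norm (matrix_of_endo X) \<le> norm X * real (CARD('n))^2"
    by (simp add: power2_eq_square algebra_simps)
qed

lemma endo_of_matrix_mpow: "endo_of_matrix (mpow A n) = endo_of_matrix A ^ n"
  by (induction n) (simp_all add: mpow_def endo_of_matrix_one endo_of_matrix_mult)

lemma mexp_eq_exp: "mexp A = matrix_of_endo (exp (endo_of_matrix A))"
proof -
  have "matrix_of_endo (exp (endo_of_matrix A)) = (\<Sum>n. matrix_of_endo (endo_of_matrix A ^ n /\<^sub>R fact n))"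
    unfolding exp_def by (rule bounded_linear.suminf[OF bounded_linear_matrix_of_endo summable_exp_generic])
  then show ?thesis
    by (simp add: mexp_def matrix_of_endo_scaleR endo_of_matrix_mpow[symmetric] divide_inverse_commute)
qed

lemma mexp_zero [simp]: "mexp (0::real^'n^'n) = mat 1"
  by (simp add: mexp_eq_exp endo_of_matrix_scaleR[of 0, simplified] matrix_of_endo_one)

lemma mexp_add_scaleR: "mexp ((s + t) *\<^sub>R A) = mexp (s *\<^sub>R A) ** mexp (t *\<^sub>R A)"
proof -
  have "exp (s *\<^sub>R endo_of_matrix A + t *\<^sub>R endo_of_matrix A)
      = exp (s *\<^sub>R endo_of_matrix A) * exp (t *\<^sub>R endo_of_matrix A)"
    by (rule exp_add_commuting) (simp add: algebra_simps)
  then show ?thesis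
    by (simp add: mexp_eq_exp endo_of_matrix_scaleR endo_of_matrix_add scaleR_add_left
        matrix_of_endo_mult[symmetric])
qed

lemma mexp_scaleR_commute: "A ** mexp (t *\<^sub>R A) = mexp (t *\<^sub>R A) ** A"
  by (metis exp_times_scaleR_commute endo_of_matrix_scaleR mexp_eq_exp matrix_of_endo_of_matrix
      matrix_of_endo_mult)

lemma mexp_neg_scaleR_mult: "mexp ((- t) *\<^sub>R A) ** mexp (t *\<^sub>R A) = mat 1"
  by (metis add.left_inverse mexp_add_scaleR mexp_zero scaleR_zero_left)

lemma mexp_mult_neg_scaleR: "mexp (t *\<^sub>R A) ** mexp ((- t) *\<^sub>R A) = mat 1"
  by (metis add.right_inverse mexp_add_scaleR mexp_zero scaleR_zero_left)

lemma has_vector_derivative_mexp: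
  "((\<lambda>t. mexp (t *\<^sub>R A)) has_vector_derivative mexp (t *\<^sub>R A) ** A) (at t within S)"
  using bounded_linear.has_vector_derivative[OF bounded_linear_matrix_of_endo
      exp_scaleR_has_vector_derivative_right[of "endo_of_matrix A" t S]]
  by (simp add: mexp_eq_exp endo_of_matrix_scaleR matrix_of_endo_mult)

lemma has_vector_derivative_mexp_vector:
  "((\<lambda>s. mexp (s *\<^sub>R A) *v z) has_vector_derivative A *v (mexp (s *\<^sub>R A) *v z)) (at s within S)"
  using has_vector_derivative_matrix_vector_mult[OF has_vector_derivative_mexp has_vector_derivative_const]
  by (simp add: mexp_scaleR_commute[symmetric] matrix_vector_mul_assoc)

lemma has_real_derivative_mexp_component:
  "((\<lambda>s. (mexp (s *\<^sub>R A) *v z) $ i) has_real_derivative (A *v (mexp (s *\<^sub>R A) *v z)) $ i) (at s)"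
  using bounded_linear.has_vector_derivative[OF bounded_linear_vec_nth has_vector_derivative_mexp_vector]
  by (simp add: has_real_derivative_iff_has_vector_derivative)

lemma mexp_diff_scaleR_vector:
  "mexp ((t - c) *\<^sub>R A) *v x = mexp (t *\<^sub>R A) *v (mexp ((- c) *\<^sub>R A) *v x)"
  using mexp_add_scaleR[of t "- c" A] by (simp add: matrix_vector_mul_assoc)

lemma linear_ode_solution_eq_mexp:
  fixes A :: "real^'n^'n" and u :: "real \<Rightarrow> real^'n"
  assumes "\<And>t. t \<in> {a..b} \<Longrightarrow> (u has_vector_derivative A *v u t) (at t within {a..b})"
    and "t \<in> {a..b}"
  shows "u t = mexp ((t - a) *\<^sub>R A) *v u a"
proof -
  define w where "w t = mexp ((a - t) *\<^sub>R A) *v u t" for t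
  have "(w has_derivative (\<lambda>h. 0)) (at t within {a..b})" if "t \<in> {a..b}" for t
  proof -
    have "((\<lambda>t. mexp (t *\<^sub>R A)) \<circ> (\<lambda>t. a - t) has_vector_derivative
        (- 1) *\<^sub>R (mexp ((a - t) *\<^sub>R A) ** A)) (at t within {a..b})"
      by (rule vector_diff_chain_within[OF _ has_vector_derivative_mexp])
        (auto intro!: derivative_eq_intros)
    then have "((\<lambda>t. mexp ((a - t) *\<^sub>R A)) has_vector_derivative - (mexp ((a - t) *\<^sub>R A) ** A))
        (at t within {a..b})"
      by (simp add: o_def)
    from has_vector_derivative_matrix_vector_mult[OF this assms(1)[OF that]]
    show ?thesis
      unfolding w_def[abs_def] has_vector_derivative_def
      by (simp add: matrix_vector_mul_assoc matrix_vector_mult_uminus_left)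
  qed
  then obtain c where "\<forall>t\<in>{a..b}. w t = c"
    using has_derivative_zero_constant[of "{a..b}" w] by auto
  with assms(2) have "w t = w a" by auto
  then have "mexp ((t - a) *\<^sub>R A) *v w t = mexp ((t - a) *\<^sub>R A) *v u a"
    by (simp add: w_def)
  moreover have "mexp ((t - a) *\<^sub>R A) *v w t = u t"
    using mexp_mult_neg_scaleR[of "t - a" A] by (simp add: w_def matrix_vector_mul_assoc)
  ultimately show ?thesis by simp
qed

section \<open>Periodically switched affine systems\<close>

definition switched_solution ::
  "real^'n^'n \<Rightarrow> real^'n^'n \<Rightarrow> real^'n \<Rightarrow> real \<Rightarrow> (real \<Rightarrow> real^'n) \<Rightarrow> bool" where
  "switched_solution A B b T x \<longleftrightarrow>
     continuous_on {0..} x \<and>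
     (\<forall>k::nat. \<forall>t \<in> {real k * T .. real k * T + T / 2}.
        (x has_vector_derivative (A *v x t + b)) (at t within {real k * T .. real k * T + T / 2})) \<and>
     (\<forall>k::nat. \<forall>t \<in> {real k * T + T / 2 .. real (Suc k) * T}.
        (x has_vector_derivative (B *v x t)) (at t within {real k * T + T / 2 .. real (Suc k) * T}))"

lemma is_solution_iff_switched_solution:
  "is_solution R L C Vdc T x \<longleftrightarrow> switched_solution (A1 R L C) (A2 R L C) (b1 L Vdc) T x"
  unfolding is_solution_def switched_solution_def ..

lemma period_index:
  assumes "0 < T" "real k * T \<le> t" "t < real (Suc k) * T"
  shows "nat \<lfloor>t / T\<rfloor> = k"
proof -
  have "real k \<le> t / T" "t / T < real k + 1"
    using assms by (auto simp: field_simps)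
  then show ?thesis by linarith
qed

lemma period_index_bounds:
  assumes "0 < T" "0 \<le> t"
  shows "real (nat \<lfloor>t / T\<rfloor>) * T \<le> t" "t < real (Suc (nat \<lfloor>t / T\<rfloor>)) * T"
  using floor_divide_lower[of T t] floor_divide_upper[of T t] assms by (simp_all add: add.commute)

locale switched_affine_system =
  fixes A B :: "real^'n^'n" and b :: "real^'n" and T :: real
  assumes period_pos: "0 < T" and invertible_A: "invertible A"
begin

definition equilibrium :: "real^'n" where
  "equilibrium = - (matrix_inv A *v b)"

definition flow1 :: "real \<Rightarrow> real^'n \<Rightarrow> real^'n" where
  "flow1 s a = equilibrium + mexp (s *\<^sub>R A) *v (a - equilibrium)"

definition flow2 :: "real \<Rightarrow> real^'n \<Rightarrow> real^'n" where
  "flow2 s a = mexp (s *\<^sub>R B) *v a"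

definition period_map :: "real^'n \<Rightarrow> real^'n" where
  "period_map a = flow2 (T / 2) (flow1 (T / 2) a)"

definition monodromy :: "real^'n^'n" where
  "monodromy = mexp ((T / 2) *\<^sub>R B) ** mexp ((T / 2) *\<^sub>R A)"

definition trajectory :: "real^'n \<Rightarrow> real \<Rightarrow> real^'n" where
  "trajectory a t = (let k = nat \<lfloor>t / T\<rfloor>; s = t - real k * T in
     if s \<le> T / 2 then flow1 s ((period_map ^^ k) a)
     else flow2 (s - T / 2) (flow1 (T / 2) ((period_map ^^ k) a)))"

lemma A_matrix_inv: "A ** matrix_inv A = mat 1" "matrix_inv A ** A = mat 1"
  using invertible_A by (simp_all add: matrix_inv_mult_right matrix_inv_mult_left)

lemma A_equilibrium: "A *v equilibrium = - b"
  by (simp add: equilibrium_def matrix_vector_mult_uminus_right matrix_vector_mul_assoc A_matrix_inv)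

lemma matrix_inv_A_mexp_commute: "matrix_inv A ** mexp (s *\<^sub>R A) = mexp (s *\<^sub>R A) ** matrix_inv A"
proof -
  let ?E = "mexp (s *\<^sub>R A)"
  have "matrix_inv A ** ?E = matrix_inv A ** ?E ** (A ** matrix_inv A)"
    by (simp add: A_matrix_inv)
  also have "\<dots> = matrix_inv A ** (A ** ?E) ** matrix_inv A"
    by (simp add: matrix_mul_assoc mexp_scaleR_commute)
  also have "\<dots> = ?E ** matrix_inv A"
    by (simp add: matrix_mul_assoc A_matrix_inv)
  finally show ?thesis .
qed

lemma flow1_variation_of_constants:
  "flow1 s a = mexp (s *\<^sub>R A) *v a + (matrix_inv A ** (mexp (s *\<^sub>R A) - mat 1)) *v b"
proof -
  have "matrix_inv A *v (mexp (s *\<^sub>R A) *v b) = mexp (s *\<^sub>R A) *v (matrix_inv A *v b)"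
    by (metis matrix_vector_mul_assoc matrix_inv_A_mexp_commute)
  then show ?thesis
    by (simp add: flow1_def equilibrium_def matrix_vector_mult_diff_distrib matrix_vector_right_distrib
        matrix_vector_mult_uminus_right matrix_vector_mult_diff_rdistrib matrix_vector_mul_assoc[symmetric])
qed

lemma flow1_zero [simp]: "flow1 0 a = a"
  by (simp add: flow1_def)

lemma flow2_zero [simp]: "flow2 0 a = a"
  by (simp add: flow2_def)

lemma flow1_diff: "flow1 s a - flow1 s c = mexp (s *\<^sub>R A) *v (a - c)"
  by (simp add: flow1_def matrix_vector_mult_diff_distrib)

lemma flow2_diff: "flow2 s a - flow2 s c = mexp (s *\<^sub>R B) *v (a - c)"
  by (simp add: flow2_def matrix_vector_mult_diff_distrib)

lemma period_map_diff: "period_map a - period_map c = monodromy *v (a - c)"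
  by (simp add: period_map_def flow2_diff flow1_diff monodromy_def matrix_vector_mul_assoc)

lemma period_map_zero:
  "period_map 0 = (mexp ((T / 2) *\<^sub>R B) ** matrix_inv A ** (mexp ((T / 2) *\<^sub>R A) - mat 1)) *v b"
  by (simp add: period_map_def flow2_def flow1_variation_of_constants matrix_vector_mul_assoc
      matrix_mul_assoc)

lemma has_vector_derivative_flow1:
  "((\<lambda>t. flow1 (t - c) a) has_vector_derivative A *v flow1 (t - c) a + b) (at t within S)"
proof -
  let ?v = "mexp ((- c) *\<^sub>R A) *v (a - equilibrium)"
  have "((\<lambda>t. equilibrium + mexp (t *\<^sub>R A) *v ?v) has_vector_derivative
      A *v (mexp (t *\<^sub>R A) *v ?v)) (at t within S)"
    using has_vector_derivative_add[OF has_vector_derivative_const has_vector_derivative_mexp_vector]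
    by simp
  then show ?thesis
    by (simp add: flow1_def mexp_diff_scaleR_vector matrix_vector_right_distrib A_equilibrium)
qed

lemma has_vector_derivative_flow2:
  "((\<lambda>t. flow2 (t - c) a) has_vector_derivative B *v flow2 (t - c) a) (at t within S)"
  unfolding flow2_def mexp_diff_scaleR_vector by (rule has_vector_derivative_mexp_vector)

lemma trajectory_first_half:
  assumes "t \<in> {real k * T .. real k * T + T / 2}"
  shows "trajectory a t = flow1 (t - real k * T) ((period_map ^^ k) a)"
proof -
  have "nat \<lfloor>t / T\<rfloor> = k"
    using assms period_pos by (intro period_index) (auto simp: field_simps)
  with assms show ?thesis by (simp add: trajectory_def)
qed

lemma trajectory_second_half:
  assumes "t \<in> {real k * T + T / 2 .. real (Suc k) * T}"
  shows "trajectory a t = flow2 (t - (real k * T + T / 2)) (flow1 (T / 2) ((period_map ^^ k) a))"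
proof (cases "t = real (Suc k) * T")
  case True
  then have "trajectory a t = flow1 0 ((period_map ^^ Suc k) a)"
    using trajectory_first_half[of t "Suc k"] period_pos by simp
  also have "\<dots> = flow2 (t - (real k * T + T / 2)) (flow1 (T / 2) ((period_map ^^ k) a))"
    using True by (simp add: period_map_def algebra_simps)
  finally show ?thesis .
next
  case False
  then have "nat \<lfloor>t / T\<rfloor> = k"
    using assms period_pos by (intro period_index) auto
  with assms show ?thesis
    by (cases "t = real k * T + T / 2") (simp_all add: trajectory_def algebra_simps)
qed

lemma trajectory_has_derivative_first_half:
  assumes "t \<in> {real k * T .. real k * T + T / 2}"
  shows "(trajectory a has_vector_derivative A *v trajectory a t + b)
    (at t within {real k * T .. real k * T + T / 2})"
  using has_vector_derivative_transform[OF assms trajectory_first_half has_vector_derivative_flow1]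
    trajectory_first_half[OF assms] by simp

lemma trajectory_has_derivative_second_half:
  assumes "t \<in> {real k * T + T / 2 .. real (Suc k) * T}"
  shows "(trajectory a has_vector_derivative B *v trajectory a t)
    (at t within {real k * T + T / 2 .. real (Suc k) * T})"
  using has_vector_derivative_transform[OF assms trajectory_second_half has_vector_derivative_flow2]
    trajectory_second_half[OF assms] by simp

lemma continuous_on_trajectory_initial_periods: "continuous_on {0 .. real n * T} (trajectory a)"
proof (induction n)
  case (Suc n)
  have n_nonneg: "0 \<le> real n * T"
    using period_pos by simp
  have "{0 .. real (Suc n) * T} =
      {0 .. real n * T} \<union> {real n * T .. real n * T + T / 2} \<union> {real n * T + T / 2 .. real (Suc n) * T}"
    using period_pos by (auto simp: distrib_right) (use n_nonneg in linarith)+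
  moreover have "continuous_on {real n * T .. real n * T + T / 2} (trajectory a)"
    "continuous_on {real n * T + T / 2 .. real (Suc n) * T} (trajectory a)"
    unfolding continuous_on_eq_continuous_within
    by (blast intro: has_vector_derivative_continuous trajectory_has_derivative_first_half
        trajectory_has_derivative_second_half)+
  ultimately show ?case
    using Suc by (metis closed_Un closed_atLeastAtMost continuous_on_closed_Un)
qed simp

lemma continuous_on_trajectory: "continuous_on {0..} (trajectory a)"
  unfolding continuous_on_eq_continuous_within
proof
  fix t :: real
  assume "t \<in> {0..}"
  obtain n :: nat where "t < real n * T"
    using reals_Archimedean2[of "t / T"] period_pos by (auto simp: field_simps)
  with \<open>t \<in> {0..}\<close> have "at t within {0..} = at t within {0 .. real n * T}"
    by (intro at_within_nhd[where S = "{..< real n * T}"]) auto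
  with continuous_on_trajectory_initial_periods[of n a] \<open>t < real n * T\<close> \<open>t \<in> {0..}\<close>
  show "continuous (at t within {0..}) (trajectory a)"
    by (simp add: continuous_on_eq_continuous_within)
qed

lemma switched_solution_trajectory: "switched_solution A B b T (trajectory a)"
  unfolding switched_solution_def
  using continuous_on_trajectory trajectory_has_derivative_first_half
    trajectory_has_derivative_second_half by blast

lemma trajectory_zero [simp]: "trajectory a 0 = a"
  using trajectory_first_half[of 0 0 a] period_pos by simp

lemma trajectory_add_period:
  assumes "0 \<le> t"
  shows "trajectory a (t + T) = trajectory (period_map a) t"
proof -
  have "\<lfloor>(t + T) / T\<rfloor> = \<lfloor>t / T\<rfloor> + 1"
    using period_pos by (simp add: add_divide_distrib)
  moreover have "0 \<le> \<lfloor>t / T\<rfloor>"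
    using assms period_pos by simp
  ultimately have "nat \<lfloor>(t + T) / T\<rfloor> = Suc (nat \<lfloor>t / T\<rfloor>)"
    by (metis Suc_nat_eq_nat_zadd1 add.commute)
  then show ?thesis
    by (simp add: trajectory_def Let_def funpow_Suc_right algebra_simps del: funpow.simps)
qed

lemma solution_eq_trajectory:
  assumes x: "switched_solution A B b T x" and "0 \<le> t"
  shows "x t = trajectory (x 0) t"
proof -
  have first_half: "x t = flow1 (t - real k * T) (x (real k * T))"
    if "t \<in> {real k * T .. real k * T + T / 2}" for k t
  proof -
    have "((\<lambda>t. x t - equilibrium) has_vector_derivative A *v (x t - equilibrium))
        (at t within {real k * T .. real k * T + T / 2})"
      if "t \<in> {real k * T .. real k * T + T / 2}" for t
      using has_vector_derivative_diff[OF x[unfolded switched_solution_def, THEN conjunct2, THEN conjunct1,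
            rule_format, OF that] has_vector_derivative_const]
      by (simp add: matrix_vector_mult_diff_distrib A_equilibrium)
    from linear_ode_solution_eq_mexp[OF this \<open>t \<in> _\<close>] show ?thesis
      by (simp add: flow1_def algebra_simps)
  qed
  have second_half: "x t = flow2 (t - (real k * T + T / 2)) (x (real k * T + T / 2))"
    if "t \<in> {real k * T + T / 2 .. real (Suc k) * T}" for k t
    using linear_ode_solution_eq_mexp[OF _ that] x unfolding switched_solution_def flow2_def by blast
  have at_periods: "x (real k * T) = (period_map ^^ k) (x 0)" for k
  proof (induction k)
    case (Suc k)
    have "x (real (Suc k) * T) = flow2 (T / 2) (x (real k * T + T / 2))"
      using second_half[of "real (Suc k) * T" k] period_pos by (simp add: algebra_simps)
    also have "x (real k * T + T / 2) = flow1 (T / 2) (x (real k * T))"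
      using first_half[of "real k * T + T / 2" k] period_pos by simp
    finally show ?case
      using Suc by (simp add: period_map_def)
  qed simp
  define k where "k = nat \<lfloor>t / T\<rfloor>"
  have "real k * T \<le> t" "t < real (Suc k) * T"
    using period_index_bounds[OF period_pos \<open>0 \<le> t\<close>] by (simp_all add: k_def)
  then consider "t \<in> {real k * T .. real k * T + T / 2}" | "t \<in> {real k * T + T / 2 .. real (Suc k) * T}"
    by fastforce
  then show ?thesis
  proof cases
    case 1
    then show ?thesis
      using first_half trajectory_first_half at_periods by simp
  next
    case 2
    moreover have "x (real k * T + T / 2) = flow1 (T / 2) (x (real k * T))"
      using first_half[of "real k * T + T / 2" k] period_pos by simp
    ultimately show ?thesis
      using second_half trajectory_second_half at_periods by simp
  qed
qed

lemma periodic_trajectory_iff: "(\<forall>t\<ge>0. trajectory a (t + T) = trajectory a t) \<longleftrightarrow> period_map a = a"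
  using trajectory_add_period[of 0 a] by (auto simp: trajectory_add_period)

lemma period_map_fixed_point_iff:
  assumes "invertible (mat 1 - monodromy)"
  shows "period_map a = a \<longleftrightarrow> a = matrix_inv (mat 1 - monodromy) *v period_map 0"
proof -
  have "period_map a = monodromy *v a + period_map 0"
    using period_map_diff[of a 0] by (simp add: algebra_simps)
  then have "period_map a = a \<longleftrightarrow> (mat 1 - monodromy) *v a = period_map 0"
    by (auto simp: matrix_vector_mult_diff_rdistrib algebra_simps)
  also have "\<dots> \<longleftrightarrow> a = matrix_inv (mat 1 - monodromy) *v period_map 0"
    using matrix_inv_mult_left[OF assms] matrix_inv_mult_right[OF assms]
    by (metis matrix_vector_mul_assoc matrix_vector_mul_lid)
  finally show ?thesis .
qed

lemma periodic_solution_unique: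
  assumes "invertible (mat 1 - monodromy)"
    and y: "switched_solution A B b T y" and y_periodic: "\<forall>t\<ge>0. y (t + T) = y t" and "0 \<le> t"
  shows "y t = trajectory (matrix_inv (mat 1 - monodromy) *v period_map 0) t"
proof -
  have "trajectory (y 0) (t + T) = trajectory (y 0) t" if "0 \<le> t" for t
    using y_periodic solution_eq_trajectory[OF y, of t] solution_eq_trajectory[OF y, of "t + T"]
      period_pos that by simp
  then have "y 0 = matrix_inv (mat 1 - monodromy) *v period_map 0"
    using periodic_trajectory_iff period_map_fixed_point_iff[OF assms(1)] by auto
  then show ?thesis
    using solution_eq_trajectory[OF y \<open>0 \<le> t\<close>] by simp
qed

lemma filterlim_period_index_at_top: "filterlim (\<lambda>t. nat \<lfloor>t / T\<rfloor>) sequentially at_top"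
proof -
  have "filterlim (\<lambda>t::real. t / T) at_top at_top"
    using filterlim_tendsto_pos_mult_at_top[OF tendsto_const _ filterlim_ident, of "1 / T"] period_pos
    by simp
  then show ?thesis
    by (rule filterlim_compose[OF filterlim_nat_sequentially
          filterlim_compose[OF filterlim_floor_sequentially]])
qed

context
  fixes V :: "real^'n \<Rightarrow> real" and q :: real
  assumes V_flow1: "\<And>s z. 0 \<le> s \<Longrightarrow> V (mexp (s *\<^sub>R A) *v z) \<le> V z"
    and V_flow2: "\<And>s z. 0 \<le> s \<Longrightarrow> V (mexp (s *\<^sub>R B) *v z) \<le> V z"
    and V_monodromy: "\<And>z. V (monodromy *v z) \<le> q * V z"
    and q_nonneg: "0 \<le> q"
begin

lemma iterated_period_map_diff_bound:
  "V ((period_map ^^ k) a - (period_map ^^ k) c) \<le> q ^ k * V (a - c)"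
proof (induction k)
  case (Suc k)
  have "V ((period_map ^^ Suc k) a - (period_map ^^ Suc k) c)
      = V (monodromy *v ((period_map ^^ k) a - (period_map ^^ k) c))"
    by (simp add: period_map_diff)
  also have "\<dots> \<le> q * V ((period_map ^^ k) a - (period_map ^^ k) c)"
    by (rule V_monodromy)
  also have "\<dots> \<le> q * (q ^ k * V (a - c))"
    using Suc q_nonneg by (rule mult_left_mono)
  finally show ?case by simp
qed simp

lemma trajectory_diff_bound:
  assumes "0 \<le> t"
  shows "V (trajectory a t - trajectory c t) \<le> q ^ nat \<lfloor>t / T\<rfloor> * V (a - c)"
proof -
  define k where "k = nat \<lfloor>t / T\<rfloor>"
  let ?d = "(period_map ^^ k) a - (period_map ^^ k) c"
  have "real k * T \<le> t" "t < real (Suc k) * T"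
    using period_index_bounds[OF period_pos assms] by (simp_all add: k_def)
  then consider "t \<in> {real k * T .. real k * T + T / 2}" | "t \<in> {real k * T + T / 2 .. real (Suc k) * T}"
    by fastforce
  then have "V (trajectory a t - trajectory c t) \<le> V ?d"
  proof cases
    case 1
    then have "V (trajectory a t - trajectory c t) = V (mexp ((t - real k * T) *\<^sub>R A) *v ?d)"
      by (simp add: trajectory_first_half flow1_diff)
    also have "\<dots> \<le> V ?d"
      using 1 by (intro V_flow1) simp
    finally show ?thesis .
  next
    case 2
    then have "V (trajectory a t - trajectory c t)
        = V (mexp ((t - (real k * T + T / 2)) *\<^sub>R B) *v (mexp ((T / 2) *\<^sub>R A) *v ?d))"
      by (simp add: trajectory_second_half flow2_diff flow1_diff)
    also have "\<dots> \<le> V (mexp ((T / 2) *\<^sub>R A) *v ?d)"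
      using 2 by (intro V_flow2) simp
    also have "\<dots> \<le> V ?d"
      using period_pos by (intro V_flow1) simp
    finally show ?thesis .
  qed
  also have "\<dots> \<le> q ^ k * V (a - c)"
    by (rule iterated_period_map_diff_bound)
  finally show ?thesis
    by (simp add: k_def)
qed

lemma solution_tendsto_trajectory:
  assumes "q < 1" and "0 < m" and V_lower: "\<And>z. m * (norm z)\<^sup>2 \<le> V z"
    and x: "switched_solution A B b T x"
  shows "((\<lambda>t. x t - trajectory c t) \<longlongrightarrow> 0) at_top"
proof (rule Lim_null_comparison)
  define bound where "bound t = sqrt (q ^ nat \<lfloor>t / T\<rfloor> * V (x 0 - c) / m)" for t
  show "\<forall>\<^sub>F t in at_top. norm (x t - trajectory c t) \<le> bound t"
    unfolding eventually_at_top_linorder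
  proof (intro exI allI impI)
    fix t :: real
    assume "0 \<le> t"
    have "m * (norm (x t - trajectory c t))\<^sup>2 \<le> V (x t - trajectory c t)"
      by (rule V_lower)
    also have "\<dots> \<le> q ^ nat \<lfloor>t / T\<rfloor> * V (x 0 - c)"
      using solution_eq_trajectory[OF x \<open>0 \<le> t\<close>] trajectory_diff_bound[OF \<open>0 \<le> t\<close>] by simp
    finally show "norm (x t - trajectory c t) \<le> bound t"
      unfolding bound_def using \<open>0 < m\<close> by (intro real_le_rsqrt) (simp add: field_simps)
  qed
  have "((\<lambda>n. q ^ n) \<longlongrightarrow> 0) sequentially"
    using q_nonneg \<open>q < 1\<close> by (intro LIMSEQ_power_zero) simp
  from filterlim_compose[OF this filterlim_period_index_at_top]
  have "((\<lambda>t. q ^ nat \<lfloor>t / T\<rfloor>) \<longlongrightarrow> 0) at_top" .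
  then show "(bound \<longlongrightarrow> 0) at_top"
    unfolding bound_def using tendsto_real_sqrt[OF tendsto_divide_zero[OF tendsto_mult_left_zero]]
    by fastforce
qed

end

end

section \<open>The RLC circuit\<close>

text \<open>Twice the energy stored in the inductor and the capacitor.\<close>

definition rlc_energy :: "real \<Rightarrow> real \<Rightarrow> real^2 \<Rightarrow> real" where
  "rlc_energy L C w = L * (w $ 1)\<^sup>2 + C * (w $ 2)\<^sup>2"

lemma rlc_energy_scaleR: "rlc_energy L C (c *\<^sub>R w) = c\<^sup>2 * rlc_energy L C w"
  by (simp add: rlc_energy_def algebra_simps power_mult_distrib)

lemma continuous_on_rlc_energy: "continuous_on S (rlc_energy L C)"
  unfolding rlc_energy_def by (intro continuous_intros)

lemma rlc_energy_ge_norm: "min L C * (norm w)\<^sup>2 \<le> rlc_energy L C w"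
proof -
  have "(norm w)\<^sup>2 = (w $ 1)\<^sup>2 + (w $ 2)\<^sup>2"
    by (simp add: norm_vec_def L2_set_def sum_2)
  then show ?thesis
    by (simp add: rlc_energy_def distrib_left add_mono mult_right_mono)
qed

lemma rlc_energy_pos:
  assumes "0 < L" "0 < C" "w \<noteq> 0"
  shows "0 < rlc_energy L C w"
  using rlc_energy_ge_norm[of L C w] assms
  by (smt (verit) mult_pos_pos zero_less_norm_iff zero_less_power)

locale rlc_dissipative =
  fixes L C R :: real and A :: "real^2^2"
  assumes L_pos: "0 < L" and C_pos: "0 < C" and R_pos: "0 < R"
    and power_balance: "\<And>w. L * w $ 1 * (A *v w) $ 1 + C * w $ 2 * (A *v w) $ 2 = - R * (w $ 1)\<^sup>2"
    and current_observable: "\<And>w. w $ 1 = 0 \<Longrightarrow> (A *v w) $ 1 = 0 \<Longrightarrow> w = 0"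
begin

lemma has_real_derivative_energy_flow:
  "((\<lambda>s. rlc_energy L C (mexp (s *\<^sub>R A) *v z)) has_real_derivative
    - 2 * R * ((mexp (s *\<^sub>R A) *v z) $ 1)\<^sup>2) (at s)"
proof -
  let ?u = "mexp (s *\<^sub>R A) *v z"
  have "((\<lambda>s. rlc_energy L C (mexp (s *\<^sub>R A) *v z)) has_real_derivative
      L * (2 * ?u $ 1 * (A *v ?u) $ 1) + C * (2 * ?u $ 2 * (A *v ?u) $ 2)) (at s)"
    unfolding rlc_energy_def
    by (auto intro!: derivative_eq_intros has_real_derivative_mexp_component simp: power2_eq_square)
  also have "L * (2 * ?u $ 1 * (A *v ?u) $ 1) + C * (2 * ?u $ 2 * (A *v ?u) $ 2) = - 2 * R * (?u $ 1)\<^sup>2"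
    using power_balance[of ?u] by (simp add: algebra_simps)
  finally show ?thesis .
qed

lemma energy_flow_antimono:
  assumes "s \<le> s'"
  shows "rlc_energy L C (mexp (s' *\<^sub>R A) *v z) \<le> rlc_energy L C (mexp (s *\<^sub>R A) *v z)"
proof (rule DERIV_nonpos_imp_nonincreasing[OF assms])
  fix x
  show "\<exists>y. ((\<lambda>s. rlc_energy L C (mexp (s *\<^sub>R A) *v z)) has_real_derivative y) (at x) \<and> y \<le> 0"
    using has_real_derivative_energy_flow R_pos by (intro exI conjI) auto
qed

lemma energy_flow_le: "0 \<le> s \<Longrightarrow> rlc_energy L C (mexp (s *\<^sub>R A) *v z) \<le> rlc_energy L C z"
  using energy_flow_antimono[of 0 s z] by simp

lemma energy_flow_less:
  assumes "0 < h" and "z \<noteq> 0"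
  shows "rlc_energy L C (mexp (h *\<^sub>R A) *v z) < rlc_energy L C z"
proof (rule ccontr)
  define u where "u s = mexp (s *\<^sub>R A) *v z" for s
  define e where "e s = rlc_energy L C (u s)" for s
  assume "\<not> ?thesis"
  then have "e 0 \<le> e h"
    by (simp add: e_def u_def)
  moreover have "e h \<le> e s" "e s \<le> e 0" if "s \<in> {0<..<h}" for s
    using that energy_flow_antimono[of s h z] energy_flow_antimono[of 0 s z] by (simp_all add: e_def u_def)
  ultimately have e_const: "e s = e 0" if "s \<in> {0<..<h}" for s
    using that by fastforce
  have current_zero: "u s $ 1 = 0" if "s \<in> {0<..<h}" for s
  proof -
    have "(e has_real_derivative 0) (at s)"
      by (rule has_field_derivative_transform_within_open[OF DERIV_const open_greaterThanLessThan that])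
        (simp add: e_const)
    moreover have "(e has_real_derivative - 2 * R * (u s $ 1)\<^sup>2) (at s)"
      unfolding e_def u_def by (rule has_real_derivative_energy_flow)
    ultimately have "0 = - 2 * R * (u s $ 1)\<^sup>2"
      by (rule DERIV_unique)
    with R_pos show ?thesis by simp
  qed
  let ?s = "h / 2"
  have s: "?s \<in> {0<..<h}"
    using \<open>0 < h\<close> by simp
  have "((\<lambda>s. u s $ 1) has_real_derivative 0) (at ?s)"
    by (rule has_field_derivative_transform_within_open[OF DERIV_const open_greaterThanLessThan s])
      (simp add: current_zero)
  moreover have "((\<lambda>s. u s $ 1) has_real_derivative (A *v u ?s) $ 1) (at ?s)"
    unfolding u_def by (rule has_real_derivative_mexp_component)
  ultimately have "(A *v u ?s) $ 1 = 0"
    using DERIV_unique by blast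
  with current_zero[OF s] have "u ?s = 0"
    by (rule current_observable)
  then have "mexp ((- ?s) *\<^sub>R A) *v u ?s = 0"
    by simp
  with \<open>z \<noteq> 0\<close> show False
    using mexp_neg_scaleR_mult[of ?s A] by (simp add: u_def matrix_vector_mul_assoc)
qed

end

lemma A1_apply: "(A1 R L C *v w) $ 1 = - R / L * w $ 1 - w $ 2 / L" "(A1 R L C *v w) $ 2 = w $ 1 / C"
  by (simp_all add: A1_def matrix_vector_mult_def sum_2)

lemma A2_apply: "(A2 R L C *v w) $ 1 = - R / L * w $ 1 + w $ 2 / L" "(A2 R L C *v w) $ 2 = - w $ 1 / C"
  by (simp_all add: A2_def matrix_vector_mult_def sum_2)

lemma invertible_A1: "0 < L \<Longrightarrow> 0 < C \<Longrightarrow> invertible (A1 R L C)"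
  by (simp add: invertible_det_nz A1_def det_2)

lemma rlc_dissipative_A1: "0 < L \<Longrightarrow> 0 < C \<Longrightarrow> 0 < R \<Longrightarrow> rlc_dissipative L C R (A1 R L C)"
  by unfold_locales (auto simp: A1_apply field_simps power2_eq_square vec_eq_iff forall_2)

lemma rlc_dissipative_A2: "0 < L \<Longrightarrow> 0 < C \<Longrightarrow> 0 < R \<Longrightarrow> rlc_dissipative L C R (A2 R L C)"
  by unfold_locales (auto simp: A2_apply field_simps power2_eq_square vec_eq_iff forall_2)

lemma rlc_energy_switching_less:
  assumes "0 < R" "0 < L" "0 < C" "0 < s" "0 \<le> s'" "z \<noteq> 0"
  shows "rlc_energy L C ((mexp (s' *\<^sub>R A2 R L C) ** mexp (s *\<^sub>R A1 R L C)) *v z) < rlc_energy L C z"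
proof -
  have "rlc_energy L C ((mexp (s' *\<^sub>R A2 R L C) ** mexp (s *\<^sub>R A1 R L C)) *v z)
      \<le> rlc_energy L C (mexp (s *\<^sub>R A1 R L C) *v z)"
    using rlc_dissipative.energy_flow_le[OF rlc_dissipative_A2[OF assms(2,3,1)] assms(5)]
    by (simp add: matrix_vector_mul_assoc[symmetric])
  also have "\<dots> < rlc_energy L C z"
    using rlc_dissipative.energy_flow_less[OF rlc_dissipative_A1[OF assms(2,3,1)] assms(4,6)] .
  finally show ?thesis .
qed

theorem theorem1:
  fixes R L C Vdc T :: real
  assumes "R > 0" "L > 0" "C > 0" "Vdc > 0" "T > 0"
  defines "M \<equiv> mat 1 - mexp ((T / 2) *\<^sub>R A2 R L C) ** mexp ((T / 2) *\<^sub>R A1 R L C)"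
  defines "xp0 \<equiv> matrix_inv M ** mexp ((T / 2) *\<^sub>R A2 R L C) ** matrix_inv (A1 R L C)
                   ** (mexp ((T / 2) *\<^sub>R A1 R L C) - mat 1) *v b1 L Vdc"
  shows "invertible M \<and>
    (\<exists>xp. is_solution R L C Vdc T xp \<and> (\<forall>t\<ge>0. xp (t + T) = xp t) \<and>
       (\<forall>y. is_solution R L C Vdc T y \<and> (\<forall>t\<ge>0. y (t + T) = y t) \<longrightarrow> (\<forall>t\<ge>0. y t = xp t)) \<and>
       xp 0 = xp0 \<and>
       (\<forall>t\<in>{0..T/2}. xp t = mexp (t *\<^sub>R A1 R L C) *v xp 0
            + (matrix_inv (A1 R L C) ** (mexp (t *\<^sub>R A1 R L C) - mat 1)) *v b1 L Vdc) \<and>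
       (\<forall>t\<in>{T/2<..T}. xp t = mexp ((t - T / 2) *\<^sub>R A2 R L C) *v xp (T / 2)) \<and>
       (\<forall>x0. \<exists>x. is_solution R L C Vdc T x \<and> x 0 = x0) \<and>
       (\<forall>x. is_solution R L C Vdc T x \<longrightarrow> ((\<lambda>t. x t - xp t) \<longlongrightarrow> 0) at_top))"
proof -
  interpret switched_affine_system "A1 R L C" "A2 R L C" "b1 L Vdc" T
    using assms invertible_A1 by unfold_locales auto
  have M: "M = mat 1 - monodromy"
    by (simp add: M_def monodromy_def)
  have decay: "rlc_energy L C (monodromy *v z) < rlc_energy L C z" if "z \<noteq> 0" for z
    using rlc_energy_switching_less assms that by (simp add: monodromy_def)
  have "invertible M"
    unfolding M using decay by (intro invertible_mat_1_minus) force
  obtain q where q: "0 \<le> q" "q < 1" "\<And>z. rlc_energy L C (monodromy *v z) \<le> q * rlc_energy L C z"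
    using homogeneous_contraction_uniform[OF continuous_on_rlc_energy rlc_energy_scaleR _ decay]
      rlc_energy_pos assms by blast
  define xp where "xp = trajectory (matrix_inv M *v period_map 0)"
  show ?thesis
  proof (intro conjI exI[of _ xp])
    show "is_solution R L C Vdc T xp"
      by (simp add: xp_def is_solution_iff_switched_solution switched_solution_trajectory)
    show "xp 0 = xp0"
      by (simp add: xp_def xp0_def period_map_zero matrix_vector_mul_assoc matrix_mul_assoc)
    show "\<forall>t\<ge>0. xp (t + T) = xp t"
      using periodic_trajectory_iff period_map_fixed_point_iff \<open>invertible M\<close> by (simp add: xp_def M)
    show "\<forall>y. is_solution R L C Vdc T y \<and> (\<forall>t\<ge>0. y (t + T) = y t) \<longrightarrow> (\<forall>t\<ge>0. y t = xp t)"
      using periodic_solution_unique \<open>invertible M\<close>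
      by (simp add: is_solution_iff_switched_solution xp_def M)
    show "\<forall>t\<in>{0..T/2}. xp t = mexp (t *\<^sub>R A1 R L C) *v xp 0
        + (matrix_inv (A1 R L C) ** (mexp (t *\<^sub>R A1 R L C) - mat 1)) *v b1 L Vdc"
      using trajectory_first_half[of _ 0] by (simp add: xp_def flow1_variation_of_constants)
    show "\<forall>t\<in>{T/2<..T}. xp t = mexp ((t - T / 2) *\<^sub>R A2 R L C) *v xp (T / 2)"
      using trajectory_second_half[of _ 0] trajectory_first_half[of "T / 2" 0] assms
      by (simp add: xp_def flow2_def)
    show "\<forall>x0. \<exists>x. is_solution R L C Vdc T x \<and> x 0 = x0"
      using switched_solution_trajectory trajectory_zero by (metis is_solution_iff_switched_solution)
    show "\<forall>x. is_solution R L C Vdc T x \<longrightarrow> ((\<lambda>t. x t - xp t) \<longlongrightarrow> 0) at_top"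
      using solution_tendsto_trajectory[of "rlc_energy L C" q "min L C"] q assms
        rlc_dissipative.energy_flow_le[OF rlc_dissipative_A1]
        rlc_dissipative.energy_flow_le[OF rlc_dissipative_A2]
        rlc_energy_ge_norm
      by (simp add: xp_def is_solution_iff_switched_solution)
  qed fact+
qed

end
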